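(* Let $n\ge2$ and $0\le m\le n(n-1)$. For each vertex $i$ of $\mathbb G(n,m)$ with in-degree $d_i$, the tails of its $d_i$ incoming arcs are exactly the $d_i$ smallest elements of $\{1,\dots,n\}\setminus\{i\}$.
   Context: For integers $n\ge2$ and $0\le m\le n(n-1)$, $\mathbb G(n,m)$ is the simple directed graph on vertex set $\{1,\dots,n\}$ whose arc set is $\{(\lceil \frac{i}{n-1}\rceil,\ n-((i-1)\bmod n)) : i=1,\dots,m\}$, where an arc $(j,k)$ goes from tail $j$ to head $k$ and $a\bmod b\in\{0,\dots,b-1\}$; these $m$ pairs are pairwise distinct pairs of distinct vertices. *)

theory Defs
  imports Complex_Main
begin

definition arc_tail :: "nat \<Rightarrow> nat \<Rightarrow> nat" where
  "arc_tail n i = nat \<lceil>real i / real (n - 1)\<rceil>"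

definition arc_head :: "nat \<Rightarrow> nat \<Rightarrow> nat" where
  "arc_head n i = n - ((i - 1) mod n)"

definition GG_arcs :: "nat \<Rightarrow> nat \<Rightarrow> (nat \<times> nat) set" where
  "GG_arcs n m = {(arc_tail n i, arc_head n i) | i. i \<in> {1..m}}"

definition in_arcs :: "nat \<Rightarrow> nat \<Rightarrow> nat \<Rightarrow> (nat \<times> nat) set" where
  "in_arcs n m v = {a \<in> GG_arcs n m. snd a = v}"

definition in_degree :: "nat \<Rightarrow> nat \<Rightarrow> nat \<Rightarrow> nat" where
  "in_degree n m v = card (in_arcs n m v)"

definition smallest :: "nat \<Rightarrow> nat set \<Rightarrow> nat set" where
  "smallest d S = set (take d (sorted_list_of_set S))"

end

theory Submission
  imports Defs
begin

(* The arcs entering v are those whose index i satisfies (i - 1) mod n = n - v, i.e.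
   i = n - v + 1 + k n for k = 0, 1, ...; since G(n,m) consists of the first m arcs, they are
   exactly those with k < d for some d, which is then the in-degree of v. The tail of the
   arc with parameter k is the ceiling of i/(n - 1), and this equals k + 1 if k + 1 < v and
   k + 2 otherwise: the (k+1)-st element of {1..n} - {v}. *)

lemma nat_ceiling_divide_eqI:
  fixes i N s :: nat
  assumes "(s - 1) * N < i" and "i \<le> s * N"
  shows "nat \<lceil>real i / real N\<rceil> = s"
proof -
  have "1 \<le> s" and "0 < N"
    using assms by (cases s; simp)+
  have "\<lceil>real i / real N\<rceil> = int s"
  proof (rule ceiling_unique)
    have "(real s - 1) * real N < real i"
      using assms(1) \<open>1 \<le> s\<close> by (metis of_nat_1 of_nat_diff of_nat_less_iff of_nat_mult)
    then show "real_of_int (int s) - 1 < real i / real N"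
      using \<open>0 < N\<close> by (simp add: pos_less_divide_eq)
    have "real i \<le> real s * real N"
      using assms(2) by (metis of_nat_le_iff of_nat_mult)
    then show "real i / real N \<le> real_of_int (int s)"
      using \<open>0 < N\<close> by (simp add: pos_divide_le_eq)
  qed
  then show ?thesis by simp
qed

definition skip :: "nat \<Rightarrow> nat \<Rightarrow> nat" where
  "skip v k = (if k + 1 < v then k + 1 else k + 2)"

lemma strict_mono_skip: "strict_mono (skip v)"
  by (rule strict_monoI) (simp add: skip_def)

lemma skip_image_lessThan:
  assumes "v \<in> {1..n}"
  shows "skip v ` {..<n - 1} = {1..n} - {v}"
proof
  show "skip v ` {..<n - 1} \<subseteq> {1..n} - {v}"
    using assms by (auto simp: skip_def)
  show "{1..n} - {v} \<subseteq> skip v ` {..<n - 1}"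
  proof
    fix x assume x: "x \<in> {1..n} - {v}"
    then have "x = skip v (if x < v then x - 1 else x - 2)"
      using assms by (auto simp: skip_def)
    moreover have "(if x < v then x - 1 else x - 2) < n - 1"
      using x assms by auto
    ultimately show "x \<in> skip v ` {..<n - 1}" by blast
  qed
qed

lemma sorted_list_of_set_strict_mono_image:
  fixes f :: "nat \<Rightarrow> 'a::linorder"
  assumes "strict_mono f"
  shows "sorted_list_of_set (f ` {..<N}) = map f [0..<N]"
proof -
  have "sorted_wrt (<) (map f [0..<N])"
    using assms by (simp add: sorted_wrt_map strict_mono_def sorted_wrt_mono_rel[OF _ sorted_wrt_upt])
  then have "sorted_list_of_set (set (map f [0..<N])) = map f [0..<N]"
    unfolding sorted_list_of_set_sort_remdups strict_sorted_iff
    by (simp add: distinct_remdups_id sorted_sort_id)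
  then show ?thesis by (simp add: atLeast0LessThan)
qed

lemma smallest_strict_mono_image:
  assumes "strict_mono f"
  shows "smallest d (f ` {..<N}) = f ` {..<min d N}"
proof -
  have "take d [0..<N] = [0..<min d N]"
    by (cases "d \<le> N") (simp_all add: take_upt min_def)
  then show ?thesis
    by (simp add: smallest_def sorted_list_of_set_strict_mono_image[OF assms] take_map atLeast0LessThan)
qed

lemma down_closed_eq_lessThan_card:
  fixes K :: "nat set"
  assumes "finite K" and "\<And>j k. k \<in> K \<Longrightarrow> j < k \<Longrightarrow> j \<in> K"
  shows "K = {..<card K}"
proof (cases "K = {}")
  case False
  have "K = {..Max K}"
  proof
    show "K \<subseteq> {..Max K}"
      using assms(1) by auto
    show "{..Max K} \<subseteq> K"
    proof
      fix j assume "j \<in> {..Max K}"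
      then consider "j = Max K" | "j < Max K" by fastforce
      then show "j \<in> K"
        using Max_in[OF assms(1) False] assms(2) by cases auto
    qed
  qed
  then show ?thesis
    by (metis card_atMost lessThan_Suc_atMost)
qed simp

lemma arc_head_eq_iff:
  assumes "v \<in> {1..n}" and "1 \<le> i"
  shows "arc_head n i = v \<longleftrightarrow> (\<exists>k. i = n - v + 1 + k * n)"
proof -
  have "(i - 1) mod n < n" using assms(1) by simp
  then have "arc_head n i = v \<longleftrightarrow> (i - 1) mod n = n - v"
    using assms(1) unfolding arc_head_def by auto
  also have "\<dots> \<longleftrightarrow> (\<exists>k. i - 1 = n - v + k * n)"
  proof
    assume "(i - 1) mod n = n - v"
    then have "i - 1 = n - v + (i - 1) div n * n"
      using div_mult_mod_eq[of "i - 1" n] by linarith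
    then show "\<exists>k. i - 1 = n - v + k * n" ..
  next
    assume "\<exists>k. i - 1 = n - v + k * n"
    then obtain k where k: "i - 1 = n - v + k * n" ..
    have "(i - 1) mod n = (n - v) mod n"
      unfolding k by (rule mod_mult_self1)
    also have "\<dots> = n - v"
      using assms(1) by simp
    finally show "(i - 1) mod n = n - v" .
  qed
  also have "\<dots> \<longleftrightarrow> (\<exists>k. i = n - v + 1 + k * n)"
    using assms(2) by (intro ex_cong1 iffI; linarith)
  finally show ?thesis .
qed

lemma arc_tail_eq_skip:
  assumes "v \<in> {1..n}" and "k < n - 1"
  shows "arc_tail n (n - v + 1 + k * n) = skip v k"
  unfolding arc_tail_def
proof (rule nat_ceiling_divide_eqI)
  obtain N where n: "n = N + 1" using assms by (cases n) auto
  have v: "1 \<le> v" "v \<le> N + 1" and k: "k < N" using assms n by auto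
  have i: "n - v + 1 + k * n = k * N + (k + N + 2 - v)"
    using v unfolding n by (simp add: algebra_simps)
  have distrib: "(k + 1) * N = k * N + N" "(k + 2) * N = k * N + N + N"
    by (simp_all add: algebra_simps)
  show "(skip v k - 1) * (n - 1) < n - v + 1 + k * n"
    unfolding i using v k distrib by (cases "k + 1 < v") (simp_all add: skip_def n)
  show "n - v + 1 + k * n \<le> skip v k * (n - 1)"
    unfolding i using v k distrib by (cases "k + 1 < v") (simp_all add: skip_def n)
qed

lemma in_arc_index_less:
  fixes n v k :: nat
  assumes "n - v + 1 + k * n \<le> n * (n - 1)"
  shows "k < n - 1"
proof -
  have "k * n < n * (n - 1)"
    using assms by linarith
  then show ?thesis by (simp add: mult.commute)
qed

lemma in_arcs_eq_image:
  assumes "m \<le> n * (n - 1)" and "v \<in> {1..n}"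
  shows "in_arcs n m v = (\<lambda>k. (skip v k, v)) ` {k. n - v + 1 + k * n \<le> m}"
proof -
  let ?K = "{k. n - v + 1 + k * n \<le> m}"
  have "in_arcs n m v = (\<lambda>i. (arc_tail n i, v)) ` {i \<in> {1..m}. arc_head n i = v}"
    unfolding in_arcs_def GG_arcs_def by auto
  also have "{i \<in> {1..m}. arc_head n i = v} = (\<lambda>k. n - v + 1 + k * n) ` ?K"
  proof (intro set_eqI iffI)
    fix i assume "i \<in> {i \<in> {1..m}. arc_head n i = v}"
    then obtain k where "i = n - v + 1 + k * n" and "i \<le> m"
      using arc_head_eq_iff[OF assms(2), of i] by auto
    then show "i \<in> (\<lambda>k. n - v + 1 + k * n) ` ?K" by auto
  next
    fix i assume "i \<in> (\<lambda>k. n - v + 1 + k * n) ` ?K"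
    then obtain k where "i = n - v + 1 + k * n" and "i \<le> m" by auto
    then show "i \<in> {i \<in> {1..m}. arc_head n i = v}"
      using arc_head_eq_iff[OF assms(2), of i] by auto
  qed
  also have "(\<lambda>i. (arc_tail n i, v)) ` (\<lambda>k. n - v + 1 + k * n) ` ?K = (\<lambda>k. (skip v k, v)) ` ?K"
    unfolding image_image
  proof (rule image_cong[OF refl])
    fix k assume "k \<in> ?K"
    then have "k < n - 1"
      using assms(1) by (intro in_arc_index_less[of n v]) simp
    then show "(arc_tail n (n - v + 1 + k * n), v) = (skip v k, v)"
      using arc_tail_eq_skip[OF assms(2)] by simp
  qed
  finally show ?thesis .
qed

lemma in_arc_indices_eq_lessThan:
  fixes n m v :: nat
  assumes "m \<le> n * (n - 1)"
  obtains d where "d \<le> n - 1" and "{k. n - v + 1 + k * n \<le> m} = {..<d}"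
proof -
  define K where "K = {k. n - v + 1 + k * n \<le> m}"
  have "K \<subseteq> {..<n - 1}"
  proof
    fix k assume "k \<in> K"
    then have "n - v + 1 + k * n \<le> n * (n - 1)"
      using assms by (simp add: K_def)
    then show "k \<in> {..<n - 1}"
      using in_arc_index_less by simp
  qed
  then have "finite K" and "card K \<le> n - 1"
    using finite_subset card_mono[OF finite_lessThan] by auto
  moreover have "K = {..<card K}"
  proof (rule down_closed_eq_lessThan_card[OF \<open>finite K\<close>])
    fix j k assume "k \<in> K" and "j < k"
    then have "j * n \<le> k * n" and "n - v + 1 + k * n \<le> m"
      by (simp_all add: K_def)
    then show "j \<in> K"
      unfolding K_def mem_Collect_eq by linarith
  qed
  ultimately show ?thesis
    using that unfolding K_def by blast
qed

theorem lemma11: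
  fixes n m i :: nat
  assumes "n \<ge> 2" and "m \<le> n * (n - 1)" and "i \<in> {1..n}"
  shows "fst ` in_arcs n m i = smallest (in_degree n m i) ({1..n} - {i})"
proof -
  obtain d where "d \<le> n - 1" and indices: "{k. n - i + 1 + k * n \<le> m} = {..<d}"
    using in_arc_indices_eq_lessThan[OF assms(2)] .
  have arcs: "in_arcs n m i = (\<lambda>k. (skip i k, i)) ` {..<d}"
    using in_arcs_eq_image[OF assms(2,3)] unfolding indices .
  have "inj_on (skip i) {..<d}"
    by (rule strict_mono_imp_inj_on[OF strict_mono_skip])
  then have "inj_on (\<lambda>k. (skip i k, i)) {..<d}"
    by (auto simp: inj_on_def)
  then have "in_degree n m i = d"
    unfolding in_degree_def arcs by (simp add: card_image)
  moreover have "fst ` in_arcs n m i = skip i ` {..<d}"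
    by (simp add: arcs image_image)
  moreover have "smallest d ({1..n} - {i}) = skip i ` {..<d}"
    unfolding skip_image_lessThan[OF assms(3), symmetric] smallest_strict_mono_image[OF strict_mono_skip]
    using \<open>d \<le> n - 1\<close> by (simp add: min_absorb1)
  ultimately show ?thesis by simp
qed

end
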